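(* Let $\mathcal A$ be a unital $C^*$-algebra and $\mathcal F\subseteq\mathcal A$ an algebra of finite type elements. For every projection $p\in\mathcal F$ there is an approximate unit $(p_\alpha)$ for $\mathcal F$ consisting of projections such that $p\le p_\alpha$ for all $\alpha$.
   Context: Let $\mathcal A$ be a unital $C^*$-algebra. A subalgebra $\mathcal F\subseteq\mathcal A$ is an algebra of finite type elements if: (i) $\mathcal F$ is a self-adjoint two-sided ideal of $\mathcal A$; (ii) $\mathcal F$ has an approximate unit consisting of projections, i.e. a net $(p_\alpha)$ of projections in $\mathcal F$ with $\|f-p_\alpha f\|\to0$ and $\|f-fp_\alpha\|\to0$ for every $f\in\mathcal F$; (iii) for any projections $p,q\in\mathcal F$ there is $v\in\mathcal A$ with $vv^*=q$ and $v^*vp=0$. *)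

theory Defs
  imports "HOL-Analysis.Analysis"
begin

locale unital_cstar_algebra =
  fixes scaleC :: "complex \<Rightarrow> 'a::{real_normed_algebra_1, banach} \<Rightarrow> 'a"
    and star :: "'a \<Rightarrow> 'a"
  assumes scaleC_add_right: "scaleC c (x + y) = scaleC c x + scaleC c y"
    and scaleC_add_left: "scaleC (c + d) x = scaleC c x + scaleC d x"
    and scaleC_scaleC: "scaleC c (scaleC d x) = scaleC (c * d) x"
    and scaleC_one: "scaleC 1 x = x"
    and scaleC_of_real: "scaleC (complex_of_real r) x = scaleR r x"
    and norm_scaleC: "norm (scaleC c x) = norm c * norm x"
    and scaleC_mult_left: "scaleC c x * y = scaleC c (x * y)"
    and scaleC_mult_right: "x * scaleC c y = scaleC c (x * y)"
    and star_star: "star (star x) = x"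
    and star_add: "star (x + y) = star x + star y"
    and star_scaleC: "star (scaleC c x) = scaleC (cnj c) (star x)"
    and star_mult: "star (x * y) = star y * star x"
    and cstar_identity: "norm (star x * x) = norm x ^ 2"

definition is_projection :: "('a::ring \<Rightarrow> 'a) \<Rightarrow> 'a \<Rightarrow> bool" where
  "is_projection star p \<longleftrightarrow> p * p = p \<and> star p = p"

definition cstar_le :: "('a::ring \<Rightarrow> 'a) \<Rightarrow> 'a \<Rightarrow> 'a \<Rightarrow> bool" where
  "cstar_le star x y \<longleftrightarrow> (\<exists>z. y - x = star z * z)"

definition selfadjoint_ideal ::
  "(complex \<Rightarrow> 'a::ring \<Rightarrow> 'a) \<Rightarrow> ('a \<Rightarrow> 'a) \<Rightarrow> 'a set \<Rightarrow> bool" where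
  "selfadjoint_ideal scaleC star F \<longleftrightarrow>
     0 \<in> F \<and> (\<forall>x\<in>F. \<forall>y\<in>F. x + y \<in> F) \<and> (\<forall>c. \<forall>x\<in>F. scaleC c x \<in> F) \<and>
     (\<forall>a. \<forall>f\<in>F. a * f \<in> F \<and> f * a \<in> F) \<and> (\<forall>f\<in>F. star f \<in> F)"

text \<open>An approximate unit for F consisting of projections: a net, given as a family
 e indexed by some index set together with a proper filter G on the index set
 (the tail filter of the directed set).\<close>
definition approx_unit_of_projections ::
  "('a::real_normed_algebra \<Rightarrow> 'a) \<Rightarrow> 'a set \<Rightarrow> ('i \<Rightarrow> 'a) \<Rightarrow> 'i filter \<Rightarrow> bool" where
  "approx_unit_of_projections star F e G \<longleftrightarrow>
     G \<noteq> bot \<and> (\<forall>\<alpha>. is_projection star (e \<alpha>) \<and> e \<alpha> \<in> F) \<and>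
     (\<forall>f\<in>F. ((\<lambda>\<alpha>. norm (f - e \<alpha> * f)) \<longlongrightarrow> 0) G \<and>
             ((\<lambda>\<alpha>. norm (f - f * e \<alpha>)) \<longlongrightarrow> 0) G)"

definition finite_type_elements ::
  "(complex \<Rightarrow> 'a::real_normed_algebra \<Rightarrow> 'a) \<Rightarrow> ('a \<Rightarrow> 'a) \<Rightarrow> 'a set \<Rightarrow> bool" where
  "finite_type_elements scaleC star F \<longleftrightarrow>
     selfadjoint_ideal scaleC star F \<and>
     (\<exists>(e :: 'a set \<Rightarrow> 'a) G. approx_unit_of_projections star F e G) \<and>
     (\<forall>p q. is_projection star p \<and> p \<in> F \<and> is_projection star q \<and> q \<in> F \<longrightarrow>
        (\<exists>v. v * star v = q \<and> star v * v * p = 0))"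

end

theory Submission
  imports Defs
begin

text \<open>Start from an arbitrary approximate unit of projections \<open>q\<^sub>\<alpha>\<close>. Eventually \<open>d = p - q\<^sub>\<alpha> p\<close>
is small, so \<open>1 - d\<close> is invertible by a Neumann series and \<open>r = (1 - d)\<^sup>-\<^sup>1 q\<^sub>\<alpha> (1 - d)\<close> is an
idempotent of \<open>F\<close> close to \<open>q\<^sub>\<alpha>\<close> with \<open>r p = p\<close>, because \<open>(1 - d) p = q\<^sub>\<alpha> p\<close>. Kaplansky's
formula \<open>P = r r\<^sup>* (1 + (r - r\<^sup>*)\<^sup>* (r - r\<^sup>*))\<^sup>-\<^sup>1\<close> turns \<open>r\<close> into a projection of \<open>F\<close> with
\<open>P r = r\<close>; hence \<open>P p = p\<close>, i.e. \<open>p \<le> P\<close>, and \<open>\<parallel>P x - x\<parallel> \<le> 2 \<parallel>r x - x\<parallel>\<close> shows that these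
projections again form an approximate unit.\<close>

lemma Neumann_series_inverse:
  fixes d :: "'a::{real_normed_algebra_1, banach}"
  assumes "norm d < 1"
  shows "\<exists>g. (1 - d) * g = 1 \<and> g * (1 - d) = 1"
proof -
  have summable: "summable (\<lambda>n. d ^ n)"
    by (rule summable_comparison_test[where g="\<lambda>n. norm d ^ n"])
       (auto intro: norm_power_ineq summable_geometric simp: assms)
  define g where "g = (\<Sum>n. d ^ n)"
  have tail: "(\<Sum>n. d ^ Suc n) = g - 1"
    using suminf_split_head[OF summable] g_def by simp
  have "d * g = g - 1"
    using suminf_mult[OF summable, of d] tail g_def by simp
  moreover have "g * d = g - 1"
    using suminf_mult2[OF summable, of d] tail g_def by (simp add: power_commutes)
  ultimately show ?thesis
    by (intro exI[of _ g]) (simp add: algebra_simps)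
qed

lemma norm_inverse_one_minus_sub_one:
  fixes d g :: "'a::real_normed_algebra_1"
  assumes "norm d \<le> 1/2" and "(1 - d) * g = 1"
  shows "norm (g - 1) \<le> 2 * norm d"
proof -
  have g_eq: "g - 1 = d * g"
    using assms(2) by (simp add: algebra_simps)
  have "g = 1 + d * g"
    using g_eq by (simp add: algebra_simps)
  then have "norm g \<le> 1 + norm (d * g)"
    using norm_triangle_ineq[of 1 "d * g"] by (metis norm_one)
  also have "\<dots> \<le> 1 + norm d * norm g"
    using norm_mult_ineq by simp
  finally have "norm g * (1 - norm d) \<le> 1"
    by (simp add: algebra_simps)
  moreover have "norm g * (1/2) \<le> norm g * (1 - norm d)"
    using assms(1) by (intro mult_left_mono) auto
  ultimately have "norm g \<le> 2"
    by linarith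
  have "norm (g - 1) \<le> norm d * norm g"
    unfolding g_eq by (rule norm_mult_ineq)
  also have "\<dots> \<le> norm d * 2"
    using \<open>norm g \<le> 2\<close> by (simp add: mult_left_mono)
  finally show ?thesis
    by simp
qed

lemma idempotent_conjugate_fixing:
  fixes p q :: "'a::{real_normed_algebra_1, banach}"
  assumes "p * p = p" and "q * q = q" and "norm q \<le> 1"
    and small: "norm (p - q * p) \<le> 1/2"
  shows "\<exists>a b. (a * q * b) * (a * q * b) = a * q * b \<and> a * q * b * p = p \<and>
           norm (a * q * b - q) \<le> 5 * norm (p - q * p)"
proof -
  define d where "d = p - q * p"
  define k where "k = 1 - d"
  obtain g where kg: "k * g = 1" and gk: "g * k = 1"
    using Neumann_series_inverse[of d] small by (auto simp: d_def k_def)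
  have g_close: "norm (g - 1) \<le> 2 * norm d"
    using norm_inverse_one_minus_sub_one[of d g] small kg by (simp add: d_def k_def)
  have norm_k: "norm k \<le> 2"
    using norm_triangle_ineq4[of 1 d] small by (simp add: k_def d_def)
  define r where "r = g * q * k"
  have "r * r = g * q * (k * g) * q * k"
    by (simp add: r_def mult.assoc)
  then have idem: "r * r = r"
    by (simp add: kg assms(2) r_def mult.assoc)
  have "k * p = q * p"
    using assms(1) by (simp add: k_def d_def algebra_simps mult.assoc)
  then have "r * p = g * (k * p)"
    by (metis assms(2) mult.assoc r_def)
  then have fixes_p: "r * p = p"
    by (simp add: mult.assoc[symmetric] gk)
  have "norm ((g - 1) * q * k) \<le> norm (g - 1) * norm q * norm k"
    by (metis norm_mult_ineq mult_right_mono norm_ge_zero order_trans)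
  also have "\<dots> \<le> (2 * norm d) * 1 * 2"
    using g_close assms(3) norm_k by (intro mult_mono) auto
  finally have "norm ((g - 1) * q * k) \<le> 4 * norm d"
    by simp
  moreover have "norm (q * d) \<le> norm d"
    using norm_mult_ineq[of q d] mult_right_mono[OF assms(3) norm_ge_zero[of d]] by simp
  moreover have "r - q = (g - 1) * q * k - q * d"
    by (simp add: r_def k_def algebra_simps)
  ultimately have "norm (r - q) \<le> 5 * norm d"
    using norm_triangle_ineq4[of "(g - 1) * q * k" "q * d"] by simp
  then show ?thesis
    using idem fixes_p unfolding r_def d_def by blast
qed

lemma inverse_commutes:
  fixes z w x :: "'a::monoid_mult"
  assumes "z * w = 1" and "w * z = 1" and "z * x = x * z"
  shows "w * x = x * w"
proof -
  have "w * x = w * x * (z * w)"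
    by (simp add: assms(1))
  also have "\<dots> = w * (z * x) * w"
    by (simp add: assms(3) mult.assoc)
  also have "\<dots> = x * w"
    by (simp add: mult.assoc[symmetric] assms(2))
  finally show ?thesis .
qed

context unital_cstar_algebra
begin

lemma star_diff: "star (x - y) = star x - star y"
proof -
  have "star (x - y) + star y = star x"
    using star_add[of "x - y" y] by simp
  then show ?thesis
    by (simp add: eq_diff_eq)
qed

lemma star_one: "star 1 = 1"
  using star_mult[of "star 1" 1] by (simp add: star_star)

lemma norm_star_le: "norm x \<le> norm (star x)"
proof (cases "x = 0")
  case False
  have "norm x * norm x = norm (star x * x)"
    by (simp add: cstar_identity power2_eq_square)
  also have "\<dots> \<le> norm (star x) * norm x"
    by (rule norm_mult_ineq)
  finally show ?thesis
    using False by simp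
qed simp

lemma norm_star: "norm (star x) = norm x"
  using norm_star_le[of x] norm_star_le[of "star x"] by (simp add: star_star)

lemma norm_projection_le_one:
  assumes "is_projection star P"
  shows "norm P \<le> 1"
proof -
  have "norm P * norm P = norm (star P * P)"
    by (simp add: cstar_identity power2_eq_square)
  also have "\<dots> = norm P"
    using assms by (simp add: is_projection_def)
  finally have "norm P = 0 \<or> norm P = 1"
    by (metis mult_cancel_left1)
  then show ?thesis
    by auto
qed

lemma selfadjoint_inverse:
  assumes "star z = z" and "z * w = 1" and "w * z = 1"
  shows "star w = w"
proof -
  have "star w * z = 1"
    using star_mult[of z w] assms by (simp add: star_one)
  then have "star w * (z * w) = w"
    by (simp add: mult.assoc[symmetric])
  then show ?thesis
    by (simp add: assms(2))
qed

text \<open>Since \<open>r\<close> and \<open>r\<^sup>*\<close> are idempotent,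
\<open>z = 1 + (r - r\<^sup>*)\<^sup>* (r - r\<^sup>*)\<close> satisfies \<open>r z = z r = r r\<^sup>* r\<close> and \<open>r\<^sup>* z = z r\<^sup>* = r\<^sup>* r r\<^sup>*\<close>.
The norm hypothesis only serves to invert \<open>z\<close> without spectral theory.\<close>

lemma projection_of_idempotent:
  assumes idem: "r * r = r" and small: "norm (r - star r) < 1"
  shows "\<exists>w. is_projection star (r * star r * w) \<and> r * star r * w * r = r"
proof -
  define s where "s = star r"
  define a where "a = r - s"
  have s_idem: "s * s = s"
    unfolding s_def by (metis idem star_mult)
  have "star a = - a"
    by (simp add: a_def s_def star_diff star_star)
  define z where "z = 1 + star a * a"
  have "norm (star a * a) < 1"
    using small cstar_identity[of a] by (simp add: a_def s_def power_less_one_iff)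
  then obtain w where zw: "z * w = 1" and wz: "w * z = 1"
    using Neumann_series_inverse[of "- (star a * a)"] unfolding z_def by auto
  have z_eq: "z = 1 - a * a"
    unfolding z_def \<open>star a = - a\<close> by simp
  have r_idem': "r * (r * x) = r * x" and s_idem': "s * (s * x) = s * x" for x
    using idem s_idem by (metis mult.assoc)+
  have rz: "r * z = r * s * r" and zr: "z * r = r * s * r"
    and sz: "s * z = s * r * s" and zs: "z * s = s * r * s"
    unfolding z_eq a_def by (simp_all add: algebra_simps idem r_idem' s_idem s_idem')
  have wr: "w * r = r * w" and ws: "w * s = s * w"
    using inverse_commutes[OF zw wz] rz zr sz zs by simp_all
  have "star z = z"
    by (simp add: z_def star_add star_one star_mult star_star)
  then have w_sa: "star w = w"
    using selfadjoint_inverse zw wz by blast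
  define P where "P = r * s * w"
  have "star P = w * (r * s)"
    by (simp add: P_def star_mult w_sa s_def star_star mult.assoc)
  also have "\<dots> = P"
    by (simp add: P_def mult.assoc[symmetric] wr) (simp add: mult.assoc ws)
  finally have P_sa: "star P = P" .
  have "P * r = r * s * r * w"
    by (simp add: P_def mult.assoc wr)
  also have "\<dots> = r * z * w"
    by (simp add: rz)
  also have "\<dots> = r"
    by (simp add: mult.assoc zw)
  finally have P_fixes: "P * r = r" .
  have "P * P = (P * r) * s * w"
    by (simp add: P_def mult.assoc)
  also have "\<dots> = P"
    unfolding P_fixes by (simp add: P_def)
  finally have "P * P = P" .
  then show ?thesis
    using P_sa P_fixes unfolding P_def s_def is_projection_def by blast
qed

lemma projection_fixing_approx_bound:
  assumes "is_projection star P" and "P * r = r"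
  shows "norm (P * x - x) \<le> 2 * norm (r * x - x)"
proof -
  have "norm (P * (x - r * x)) \<le> norm P * norm (x - r * x)"
    by (rule norm_mult_ineq)
  also have "\<dots> \<le> norm (x - r * x)"
    using norm_projection_le_one[OF assms(1)] by (simp add: mult_left_le_one_le)
  finally have contraction: "norm (P * (x - r * x)) \<le> norm (r * x - x)"
    by (simp add: norm_minus_commute)
  have "P * x - x = P * (x - r * x) + (r * x - x)"
    by (simp add: algebra_simps mult.assoc[symmetric] assms(2))
  then have "norm (P * x - x) \<le> norm (P * (x - r * x)) + norm (r * x - x)"
    by (metis norm_triangle_ineq)
  with contraction show ?thesis
    by simp
qed

lemma projection_dominating_near:
  assumes ideal: "\<And>a f. f \<in> F \<Longrightarrow> a * f \<in> F \<and> f * a \<in> F"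
    and q: "is_projection star q" "q \<in> F"
    and p: "is_projection star p"
    and small: "norm (p - q * p) \<le> 1/16"
  shows "\<exists>P. is_projection star P \<and> P \<in> F \<and> P * p = p \<and>
     (\<forall>x. norm (P * x - x) \<le> 2 * (norm (q * x - x) + 5 * norm (p - q * p) * norm x))"
proof -
  define \<delta> where "\<delta> = norm (p - q * p)"
  obtain a b where "(a * q * b) * (a * q * b) = a * q * b"
    and "a * q * b * p = p" and "norm (a * q * b - q) \<le> 5 * \<delta>"
    using idempotent_conjugate_fixing[of p q] p q small norm_projection_le_one[OF q(1)]
    unfolding is_projection_def \<delta>_def by auto
  moreover define r where "r = a * q * b"
  ultimately have r_idem: "r * r = r" and r_fixes: "r * p = p" and r_close: "norm (r - q) \<le> 5 * \<delta>"
    by simp_all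
  have "r \<in> F"
    unfolding r_def using ideal q(2) by blast
  have "norm (r - star r) = norm ((r - q) - star (r - q))"
    using q(1) by (simp add: star_diff is_projection_def)
  also have "\<dots> \<le> norm (r - q) + norm (star (r - q))"
    by (rule norm_triangle_ineq4)
  also have "\<dots> = 2 * norm (r - q)"
    by (simp add: norm_star)
  finally have "norm (r - star r) < 1"
    using r_close small unfolding \<delta>_def by linarith
  then obtain w where "is_projection star (r * star r * w) \<and> r * star r * w * r = r"
    using projection_of_idempotent r_idem by blast
  then obtain P where P_proj: "is_projection star P" and P_fixes: "P * r = r"
    and P_eq: "P = r * star r * w"
    by blast
  have "P \<in> F"
    unfolding P_eq using ideal \<open>r \<in> F\<close> by (metis mult.assoc)
  have "P * p = p"
    using P_fixes r_fixes by (metis mult.assoc)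
  have "norm (P * x - x) \<le> 2 * (norm (q * x - x) + 5 * \<delta> * norm x)" for x
  proof -
    have "r * x - x = (r - q) * x + (q * x - x)"
      by (simp add: algebra_simps)
    then have "norm (r * x - x) \<le> norm ((r - q) * x) + norm (q * x - x)"
      by (metis norm_triangle_ineq)
    moreover have "norm ((r - q) * x) \<le> 5 * \<delta> * norm x"
      using norm_mult_ineq[of "r - q" x] mult_right_mono[OF r_close norm_ge_zero[of x]] by simp
    ultimately show ?thesis
      using projection_fixing_approx_bound[OF P_proj P_fixes, of x] by simp
  qed
  then show ?thesis
    using P_proj \<open>P \<in> F\<close> \<open>P * p = p\<close> unfolding \<delta>_def by blast
qed

lemma approx_unit_of_left_approx:
  assumes star_closed: "\<And>f. f \<in> F \<Longrightarrow> star f \<in> F" and "G \<noteq> bot"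
    and e: "\<And>\<alpha>. is_projection star (e \<alpha>) \<and> e \<alpha> \<in> F"
    and left: "\<And>f. f \<in> F \<Longrightarrow> ((\<lambda>\<alpha>. norm (f - e \<alpha> * f)) \<longlongrightarrow> 0) G"
  shows "approx_unit_of_projections star F e G"
proof -
  have "norm (f - f * e \<alpha>) = norm (star f - e \<alpha> * star f)" for f \<alpha>
    using e[of \<alpha>] norm_star[of "f - f * e \<alpha>"]
    by (simp add: star_diff star_mult is_projection_def)
  then show ?thesis
    using assms unfolding approx_unit_of_projections_def by simp
qed

lemma cstar_le_projection:
  assumes "is_projection star p" and "is_projection star e" and "e * p = p"
  shows "cstar_le star p e"
proof -
  have "p * e = p"
    using assms star_mult[of e p] by (simp add: is_projection_def)
  then have "star (e - p) * (e - p) = e - p"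
    using assms by (simp add: star_diff is_projection_def algebra_simps)
  then show ?thesis
    unfolding cstar_le_def by metis
qed

lemma approx_unit_dominating:
  assumes ideal: "selfadjoint_ideal scaleC star F"
    and au: "approx_unit_of_projections star F q G"
    and p: "is_projection star p" "p \<in> F"
  shows "\<exists>e. approx_unit_of_projections star F e G \<and> (\<forall>\<alpha>. e \<alpha> * p = p)"
proof -
  have two_sided: "\<And>a f. f \<in> F \<Longrightarrow> a * f \<in> F \<and> f * a \<in> F"
    and star_closed: "\<And>f. f \<in> F \<Longrightarrow> star f \<in> F"
    using ideal unfolding selfadjoint_ideal_def by auto
  have "G \<noteq> bot" and q: "\<And>\<alpha>. is_projection star (q \<alpha>) \<and> q \<alpha> \<in> F"
    and q_left: "\<And>f. f \<in> F \<Longrightarrow> ((\<lambda>\<alpha>. norm (f - q \<alpha> * f)) \<longlongrightarrow> 0) G"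
    using au unfolding approx_unit_of_projections_def by auto
  define bound where "bound \<alpha> x = 2 * (norm (q \<alpha> * x - x) + 5 * norm (p - q \<alpha> * p) * norm x)"
    for \<alpha> x
  \<comment> \<open>Where \<open>q \<alpha>\<close> is still far from \<open>p\<close>, \<open>p\<close> itself serves as \<open>e \<alpha>\<close>.\<close>
  have "\<exists>P. is_projection star P \<and> P \<in> F \<and> P * p = p \<and>
          (norm (p - q \<alpha> * p) \<le> 1/16 \<longrightarrow> (\<forall>x. norm (P * x - x) \<le> bound \<alpha> x))" for \<alpha>
  proof (cases "norm (p - q \<alpha> * p) \<le> 1/16")
    case True
    then show ?thesis
      using projection_dominating_near[OF two_sided _ _ p(1)] q unfolding bound_def by blast
  qed (use p in \<open>auto simp: is_projection_def\<close>)
  then obtain e where e: "\<And>\<alpha>. is_projection star (e \<alpha>) \<and> e \<alpha> \<in> F \<and> e \<alpha> * p = p"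
    and e_bound: "\<And>\<alpha> x. norm (p - q \<alpha> * p) \<le> 1/16 \<Longrightarrow> norm (e \<alpha> * x - x) \<le> bound \<alpha> x"
    by metis
  have p_approx: "((\<lambda>\<alpha>. norm (p - q \<alpha> * p)) \<longlongrightarrow> 0) G"
    using q_left p(2) .
  then have eventually_near: "\<forall>\<^sub>F \<alpha> in G. norm (p - q \<alpha> * p) \<le> 1/16"
    using order_tendstoD(2)[OF p_approx, of "1/16"] eventually_mono by fastforce
  have "((\<lambda>\<alpha>. norm (f - e \<alpha> * f)) \<longlongrightarrow> 0) G" if "f \<in> F" for f
  proof (rule Lim_null_comparison)
    show "\<forall>\<^sub>F \<alpha> in G. norm (norm (f - e \<alpha> * f)) \<le> bound \<alpha> f"
      using eventually_near by eventually_elim (use e_bound in \<open>simp add: norm_minus_commute\<close>)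
    have "((\<lambda>\<alpha>. bound \<alpha> f) \<longlongrightarrow> 2 * (0 + 5 * 0 * norm f)) G"
      unfolding bound_def norm_minus_commute[of "q _ * f"]
      by (intro tendsto_intros q_left[OF that] p_approx)
    then show "((\<lambda>\<alpha>. bound \<alpha> f) \<longlongrightarrow> 0) G"
      by simp
  qed
  then show ?thesis
    using approx_unit_of_left_approx[OF star_closed \<open>G \<noteq> bot\<close>] e by blast
qed

end

theorem mainTheorem12:
  fixes scaleC :: "complex \<Rightarrow> 'a::{real_normed_algebra_1, banach} \<Rightarrow> 'a"
    and star :: "'a \<Rightarrow> 'a" and F :: "'a set" and p :: 'a
  assumes "unital_cstar_algebra scaleC star"
    and "finite_type_elements scaleC star F"
    and "is_projection star p" and "p \<in> F"
  shows "\<exists>(e :: 'a set \<Rightarrow> 'a) G. approx_unit_of_projections star F e G \<and>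
           (\<forall>\<alpha>. cstar_le star p (e \<alpha>))"
proof -
  interpret unital_cstar_algebra scaleC star by fact
  obtain q :: "'a set \<Rightarrow> 'a" and G where "approx_unit_of_projections star F q G"
    and "selfadjoint_ideal scaleC star F"
    using assms(2) unfolding finite_type_elements_def by blast
  then obtain e where au: "approx_unit_of_projections star F e G" and "\<forall>\<alpha>. e \<alpha> * p = p"
    using approx_unit_dominating assms(3,4) by blast
  then have "cstar_le star p (e \<alpha>)" for \<alpha>
    using cstar_le_projection[OF assms(3)] au unfolding approx_unit_of_projections_def by blast
  then show ?thesis
    using au by blast
qed

end
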